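(* For every integer $N\ge2$ and generic $t,\Delta$ (so that $h_N(0)\neq0$ and $1-2\Delta t+t^2\ne0$), $$h_{N-1}'(1)=\frac{1}{1-2\Delta t+t^2}\left\{\frac{h_N'(0)}{h_N(0)}-t^2\right\}.$$
   Context: Define functions $\phi_j(t)$ by $\phi_0\equiv1$ and $\phi_{j+1}(t)=t\frac{d}{dt}\big[(t-2\Delta+t^{-1})\phi_j(t)\big]$. For $N\ge1$ the polynomial $h_N(z)=h_N(z;t,\Delta)$ is $$h_N(z)=(N-1)!\Big((t-2\Delta+t^{-1})\frac{z}{z-1}\Big)^{N-1}\frac{\det\big[M_{ij}\big]_{i,j=1}^N}{\det[\phi_{i+j-2}(t)]_{i,j=1}^N},$$ where $M_{ij}=\phi_{i+j-2}(t)$ for $j=1,\dots,N-1$ and $M_{iN}=\phi_{i-1}(tz)$. Primes denote derivatives in $z$. (E.g. $h_1=1$, $h_2(z)=(1+t^2z)/(1+t^2)$.) *)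

theory Defs
  imports "HOL-Analysis.Analysis" "Jordan_Normal_Form.Determinant" "HOL-Computational_Algebra.Polynomial"
begin

primrec phi :: "real \<Rightarrow> nat \<Rightarrow> real \<Rightarrow> real" where
  "phi \<Delta> 0 = (\<lambda>t. 1)"
| "phi \<Delta> (Suc j) = (\<lambda>t. t * deriv (\<lambda>s. (s - 2 * \<Delta> + 1 / s) * phi \<Delta> j s) t)"

text \<open>Hankel matrix [phi_(i+j-2)(t)]_(i,j=1..N), 0-indexed.\<close>
definition hankel_mat :: "real \<Rightarrow> real \<Rightarrow> nat \<Rightarrow> real mat" where
  "hankel_mat \<Delta> t N = mat N N (\<lambda>(i, j). phi \<Delta> (i + j) t)"

definition M_mat :: "real \<Rightarrow> real \<Rightarrow> nat \<Rightarrow> real \<Rightarrow> real mat" where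
  "M_mat \<Delta> t N z = mat N N (\<lambda>(i, j). if j = N - 1 then phi \<Delta> i (t * z) else phi \<Delta> (i + j) t)"

definition h_raw :: "real \<Rightarrow> real \<Rightarrow> nat \<Rightarrow> real \<Rightarrow> real" where
  "h_raw \<Delta> t N z = fact (N - 1) * ((t - 2 * \<Delta> + 1 / t) * (z / (z - 1))) ^ (N - 1)
      * det (M_mat \<Delta> t N z) / det (hankel_mat \<Delta> t N)"

text \<open>h_N as a polynomial in z: the (unique) polynomial agreeing with the defining
  expression away from the removable singularities z = 0 and z = 1.\<close>
definition h_poly :: "real \<Rightarrow> real \<Rightarrow> nat \<Rightarrow> real poly" where
  "h_poly \<Delta> t N = (THE p. \<forall>z. z \<noteq> 0 \<and> z \<noteq> 1 \<longrightarrow> poly p z = h_raw \<Delta> t N z)"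

end

(*
  Expand det (M_mat z) along its last column; its coefficients are the cofactors C_i of that
  column of the Hankel matrix H_N. In the variable z the functions phi_i(t z) are obtained from 1
  by i applications of z d/dz after multiplication by alpha(z) = t z - 2 Delta + 1/(t z). Applying
  this operator j times to det (M_mat z) and evaluating at z = 1 gives sum_i C_i phi_(i+j)(t): the
  determinant of H_N with its last column shifted by j. It vanishes for j < N - 1 (two equal
  columns), is det H_N for j = N - 1 and a bordered determinant B_N for j = N. Hence
  z^(N-1) det (M_mat z) has a zero of order N - 1 at z = 1, and h_N'(1) is determined by
  det B_N / det H_N. At z = 0 only the cofactors C_(N-1) = det H_(N-1) and C_(N-2) = - det B_(N-1)
  reach the two lowest coefficients, so h_N'(0) / h_N(0) is determined by det B_(N-1) / det H_(N-1).
  Comparing the two expressions for the index N - 1 gives the identity.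
*)

theory Submission
  imports Defs "HOL-Computational_Algebra.Polynomial_FPS"
begin

section \<open>Numerators of the functions phi\<close>

fun phi_num :: "real \<Rightarrow> nat \<Rightarrow> real poly" where
  "phi_num \<Delta> 0 = 1"
| "phi_num \<Delta> (Suc j) = [:0, 1:] * pderiv ([:1, -2 * \<Delta>, 1:] * phi_num \<Delta> j)
      - Polynomial.smult (of_nat (Suc j)) ([:1, -2 * \<Delta>, 1:] * phi_num \<Delta> j)"

lemma phi_eq_phi_num:
  assumes "s \<noteq> 0"
  shows "phi \<Delta> j s = poly (phi_num \<Delta> j) s / s ^ j"
  using assms
proof (induction j arbitrary: s)
  case 0
  then show ?case by simp
next
  case (Suc j)
  define r where "r = [:1, -2 * \<Delta>, 1:] * phi_num \<Delta> j"
  have "\<forall>\<^sub>F w in nhds s. (w - 2 * \<Delta> + 1 / w) * phi \<Delta> j w = poly r w / w ^ Suc j"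
  proof (rule eventually_mono)
    show "\<forall>\<^sub>F w in nhds s. w \<noteq> 0"
      using Suc.prems by (rule t1_space_nhds)
  qed (simp add: Suc.IH r_def field_simps power2_eq_square)
  then have "deriv (\<lambda>w. (w - 2 * \<Delta> + 1 / w) * phi \<Delta> j w) s = deriv (\<lambda>w. poly r w / w ^ Suc j) s"
    by (rule deriv_cong_ev) simp
  also have "\<dots> = (poly (pderiv r) s * s ^ Suc j - poly r s * (real (Suc j) * s ^ (Suc j - Suc 0))) / (s ^ Suc j * s ^ Suc j)"
    by (rule DERIV_imp_deriv, rule DERIV_divide[OF poly_DERIV DERIV_pow]) (use Suc.prems in simp_all)
  finally have "phi \<Delta> (Suc j) s
      = s * ((poly (pderiv r) s * s ^ Suc j - poly r s * (real (Suc j) * s ^ j)) / (s ^ Suc j * s ^ Suc j))"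
    by simp
  also have "\<dots> = poly (phi_num \<Delta> (Suc j)) s / s ^ Suc j"
    using Suc.prems by (simp add: r_def field_simps power2_eq_square)
  finally show ?case .
qed

lemma coeff_0_phi_num: "coeff (phi_num \<Delta> j) 0 = (-1) ^ j * fact j"
  by (induction j) (simp_all add: coeff_pderiv)

lemma coeff_1_phi_num: "coeff (phi_num \<Delta> (Suc j)) 1 = - \<Delta> * real j * coeff (phi_num \<Delta> (Suc j)) 0"
proof -
  have rec1: "coeff (phi_num \<Delta> (Suc i)) 1 = - real i * (coeff (phi_num \<Delta> i) 1 - 2 * \<Delta> * coeff (phi_num \<Delta> i) 0)" for i
    by (simp add: coeff_pderiv algebra_simps)
  have rec0: "coeff (phi_num \<Delta> (Suc i)) 0 = - real (Suc i) * coeff (phi_num \<Delta> i) 0" for i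
    by (simp add: coeff_pderiv algebra_simps)
  show ?thesis
  proof (induction j)
    case 0
    then show ?case by (simp add: coeff_pderiv pderiv_pCons)
  next
    case (Suc j)
    then show ?case
      unfolding rec1[of "Suc j"] rec0[of "Suc j"] by (simp add: algebra_simps del: phi_num.simps)
  qed
qed

section \<open>The Euler operator on power series at \<open>z = 1\<close>\<close>

text \<open>In the variable \<open>x = z - 1\<close> the operator \<open>(1 + x) d/dx\<close> is \<open>z d/dz\<close>; \<open>euler_op \<alpha>\<close>
  multiplies by \<open>\<alpha>\<close> and then applies it.\<close>

definition euler_op :: "real fps \<Rightarrow> real fps \<Rightarrow> real fps" where
  "euler_op \<alpha> f = (1 + fps_X) * fps_deriv (\<alpha> * f)"

lemma euler_op_X_power_mult:
  "euler_op \<alpha> (fps_X ^ Suc n * G) = fps_X ^ n *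
     (of_nat (Suc n) * (1 + fps_X) * (\<alpha> * G) + fps_X * (1 + fps_X) * fps_deriv (\<alpha> * G))"
proof -
  have "fps_deriv (fps_X ^ Suc n :: real fps) = of_nat (Suc n) * fps_X ^ n"
    by (subst fps_deriv_power) (simp only: fps_of_nat fps_deriv_fps_X mult_1_right diff_Suc_1)
  then have "fps_deriv (\<alpha> * (fps_X ^ Suc n * G))
      = of_nat (Suc n) * fps_X ^ n * (\<alpha> * G) + fps_X * fps_X ^ n * fps_deriv (\<alpha> * G)"
    by (simp add: fps_deriv_mult[of "fps_X ^ Suc n" "\<alpha> * G", unfolded mult.left_commute[of _ \<alpha>]]
        algebra_simps)
  then show ?thesis
    unfolding euler_op_def by (simp only: algebra_simps)
qed

lemma euler_op_power_X_power_nth_0: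
  "fps_nth ((euler_op \<alpha> ^^ n) (fps_X ^ n * G)) 0 = fact n * fps_nth \<alpha> 0 ^ n * fps_nth G 0"
proof (induction n arbitrary: G)
  case 0
  then show ?case by simp
next
  case (Suc n)
  define G' where "G' = of_nat (Suc n) * (1 + fps_X) * (\<alpha> * G) + fps_X * (1 + fps_X) * fps_deriv (\<alpha> * G)"
  have "(euler_op \<alpha> ^^ Suc n) (fps_X ^ Suc n * G) = (euler_op \<alpha> ^^ n) (fps_X ^ n * G')"
    by (simp only: funpow_Suc_right o_apply euler_op_X_power_mult G'_def)
  moreover have "fps_nth G' 0 = real (Suc n) * fps_nth \<alpha> 0 * fps_nth G 0"
    by (simp add: G'_def)
  ultimately show ?case
    using Suc.IH by (simp add: algebra_simps)
qed

lemma euler_op_power_Suc_X_power_nth_0: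
  "fps_nth ((euler_op \<alpha> ^^ Suc n) (fps_X ^ n * G)) 0 = fact (Suc n) * fps_nth \<alpha> 0 ^ n *
     (fps_nth G 0 * real n * (fps_nth \<alpha> 1 + fps_nth \<alpha> 0) / 2 + fps_nth \<alpha> 0 * fps_nth G 1 + fps_nth \<alpha> 1 * fps_nth G 0)"
proof (induction n arbitrary: G)
  case 0
  then show ?case by (simp add: euler_op_def fps_mult_nth_1)
next
  case (Suc n)
  define G' where "G' = of_nat (Suc n) * (1 + fps_X) * (\<alpha> * G) + fps_X * (1 + fps_X) * fps_deriv (\<alpha> * G)"
  have "(euler_op \<alpha> ^^ Suc (Suc n)) (fps_X ^ Suc n * G) = (euler_op \<alpha> ^^ Suc n) (fps_X ^ n * G')"
    by (simp only: funpow_Suc_right o_apply euler_op_X_power_mult G'_def)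
  moreover have "fps_nth G' 0 = real (Suc n) * fps_nth \<alpha> 0 * fps_nth G 0"
    and "fps_nth G' 1 = real (Suc n) * fps_nth \<alpha> 0 * fps_nth G 0 + real (Suc (Suc n)) * (fps_nth \<alpha> 0 * fps_nth G 1 + fps_nth \<alpha> 1 * fps_nth G 0)"
    by (simp_all add: G'_def fps_mult_nth_1 algebra_simps)
  ultimately show ?case
    using Suc.IH by (simp add: field_simps)
qed

lemma fps_X_power_mult_fps_shift:
  assumes "\<And>k. k < m \<Longrightarrow> fps_nth f k = 0"
  shows "fps_X ^ m * fps_shift m f = f"
  by (rule fps_ext) (simp add: fps_X_power_mult_nth assms)

lemma euler_op_power_nth_0_vanishing:
  assumes "fps_nth \<alpha> 0 \<noteq> 0" and "\<And>j. j < m \<Longrightarrow> fps_nth ((euler_op \<alpha> ^^ j) q) 0 = 0" and "k < m"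
  shows "fps_nth q k = 0"
  using assms(2,3)
proof (induction m arbitrary: k)
  case 0
  then show ?case by simp
next
  case (Suc m)
  have low: "fps_nth q k = 0" if "k < m" for k
    using Suc.IH Suc.prems(1) that by simp
  have "fact m * fps_nth \<alpha> 0 ^ m * fps_nth q m = fps_nth ((euler_op \<alpha> ^^ m) (fps_X ^ m * fps_shift m q)) 0"
    by (simp add: euler_op_power_X_power_nth_0)
  also have "\<dots> = 0"
    using Suc.prems(1) by (simp add: fps_X_power_mult_fps_shift low)
  finally have "fps_nth q m = 0"
    using assms(1) by simp
  with low Suc.prems(2) show ?case
    by (metis less_SucE)
qed

lemma one_plus_X_power_mult_nth:
  fixes q :: "'a::comm_ring_1 fps"
  assumes "\<And>k. k < m \<Longrightarrow> fps_nth q k = 0"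
  shows "k < m \<Longrightarrow> fps_nth ((1 + fps_X) ^ m * q) k = 0"
    and "fps_nth ((1 + fps_X) ^ m * q) m = fps_nth q m"
    and "fps_nth ((1 + fps_X) ^ m * q) (Suc m) = fps_nth q (Suc m) + of_nat m * fps_nth q m"
proof -
  have power_nth_1: "fps_nth ((1 + fps_X :: 'a fps) ^ i) (Suc 0) = of_nat i" for i
    by (induction i) (simp_all add: fps_nth_power_0)
  define G where "G = fps_shift m q"
  have "q = fps_X ^ m * G"
    unfolding G_def using fps_X_power_mult_fps_shift[OF assms] by simp
  then have "(1 + fps_X) ^ m * q = fps_X ^ m * ((1 + fps_X) ^ m * G)"
    by (metis mult.left_commute)
  moreover have "fps_nth ((1 + fps_X) ^ m * G) 1 = fps_nth G 1 + of_nat m * fps_nth G 0"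
    by (simp add: fps_mult_nth_1 fps_nth_power_0 power_nth_1)
  ultimately show "k < m \<Longrightarrow> fps_nth ((1 + fps_X) ^ m * q) k = 0"
    and "fps_nth ((1 + fps_X) ^ m * q) m = fps_nth q m"
    and "fps_nth ((1 + fps_X) ^ m * q) (Suc m) = fps_nth q (Suc m) + of_nat m * fps_nth q m"
    by (simp_all add: fps_X_power_mult_nth fps_nth_power_0 G_def)
qed

section \<open>Factors \<open>(z - 1)^m\<close> of polynomials\<close>

lemma pcompose_X_power: "pcompose ([:0, 1:] ^ k) q = q ^ k"
  by (induction k) (simp_all add: pcompose_mult pcompose_1 pcompose_pCons)

lemma obtain_X_minus_1_power_factor:
  fixes P :: "'a::idom poly"
  assumes "\<And>k. k < m \<Longrightarrow> coeff (pcompose P [:1, 1:]) k = 0"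
  obtains R where "P = [:-1, 1:] ^ m * R"
    and "poly R 1 = coeff (pcompose P [:1, 1:]) m"
    and "poly (pderiv R) 1 = coeff (pcompose P [:1, 1:]) (Suc m)"
proof -
  define Q where "Q = pcompose P [:1, 1:]"
  have "monom 1 m dvd Q"
    unfolding monom_1_dvd_iff' Q_def using assms by blast
  then obtain S where S: "Q = monom 1 m * S"
    by (auto simp: dvd_def)
  define R where "R = pcompose S [:-1, 1:]"
  have "pcompose Q [:-1, 1:] = P"
    unfolding Q_def pcompose_assoc[symmetric] by (simp add: pcompose_pCons)
  then have "P = [:-1, 1:] ^ m * R"
    unfolding S R_def monom_altdef pcompose_mult pcompose_smult pcompose_X_power by simp
  moreover have "poly R 1 = coeff Q m"
    unfolding R_def S by (simp add: poly_pcompose coeff_monom_mult poly_0_coeff_0)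
  moreover have "poly (pderiv R) 1 = coeff Q (Suc m)"
    unfolding R_def S pderiv_pcompose
    by (simp add: poly_pcompose coeff_monom_mult poly_0_coeff_0 pderiv_pCons coeff_pderiv)
  ultimately show ?thesis
    using that unfolding Q_def by blast
qed

lemma coeff_X_minus_1_power_mult:
  fixes R :: "'a::comm_ring_1 poly"
  shows "coeff ([:-1, 1:] ^ m * R) 0 = (-1) ^ m * coeff R 0"
    and "coeff ([:-1, 1:] ^ m * R) 1 = (-1) ^ m * (coeff R 1 - of_nat m * coeff R 0)"
proof -
  have step: "coeff ([:-1, 1:] * Q) 0 = - coeff Q 0" "coeff ([:-1, 1:] * Q) 1 = coeff Q 0 - coeff Q 1"
    for Q :: "'a poly"
    by (simp_all add: algebra_simps)
  show coeff0: "coeff ([:-1, 1:] ^ m * R) 0 = (-1) ^ m * coeff R 0" for m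
    by (induction m) (simp_all only: power_Suc mult.assoc step, simp_all)
  show "coeff ([:-1, 1:] ^ m * R) 1 = (-1) ^ m * (coeff R 1 - of_nat m * coeff R 0)"
    by (induction m) (simp_all only: power_Suc mult.assoc step coeff0, simp_all add: algebra_simps)
qed

section \<open>Expansion of phi at \<open>z = 1\<close>\<close>

text \<open>\<open>alpha \<Delta> t\<close> and \<open>Phi \<Delta> t i\<close> are the expansions of \<open>t z - 2\<Delta> + 1/(t z)\<close> and of
  \<open>phi \<Delta> i (t z)\<close> at \<open>z = 1\<close>, in the variable \<open>x = z - 1\<close>.\<close>

definition alpha :: "real \<Rightarrow> real \<Rightarrow> real fps" where
  "alpha \<Delta> t = fps_const t * (1 + fps_X) - fps_const (2 * \<Delta>) + fps_const (1 / t) * inverse (1 + fps_X)"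

definition Phi :: "real \<Rightarrow> real \<Rightarrow> nat \<Rightarrow> real fps" where
  "Phi \<Delta> t i = (euler_op (alpha \<Delta> t) ^^ i) 1"

lemma inverse_one_plus_X: "inverse (1 + fps_X :: real fps) * (1 + fps_X) = 1"
  by (rule inverse_mult_eq_1) simp

lemma alpha_nth:
  "fps_nth (alpha \<Delta> t) 0 = t - 2 * \<Delta> + 1 / t"
  "fps_nth (alpha \<Delta> t) 1 = t - 1 / t"
proof -
  have "fps_nth (inverse (1 + fps_X :: real fps) * (1 + fps_X)) 1 = 0"
    unfolding inverse_one_plus_X by simp
  then have "fps_nth (inverse (1 + fps_X :: real fps)) 1 = -1"
    by (simp add: fps_mult_nth_1)
  then show "fps_nth (alpha \<Delta> t) 0 = t - 2 * \<Delta> + 1 / t" "fps_nth (alpha \<Delta> t) 1 = t - 1 / t"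
    unfolding alpha_def by (simp_all add: fps_mult_nth_1)
qed

lemma alpha_mult:
  assumes "t \<noteq> 0"
  shows "alpha \<Delta> t * (fps_const t * (1 + fps_X)) = fps_of_poly (pcompose [:1, -2 * \<Delta>, 1:] [:t, t:])"
proof -
  define W where "W = fps_const t * (1 + fps_X)"
  have W: "fps_of_poly [:t, t:] = W"
    unfolding W_def by (simp add: fps_of_poly_pCons fps_of_poly_const algebra_simps)
  have inv_t: "fps_const (1 / t) * fps_const t = (1 :: real fps)"
    using assms by (simp add: fps_const_mult[symmetric])
  have "alpha \<Delta> t * W = W * W - fps_const (2 * \<Delta>) * W
      + (fps_const (1 / t) * fps_const t) * (inverse (1 + fps_X) * (1 + fps_X))"
    unfolding alpha_def W_def by (simp add: algebra_simps)
  also have "\<dots> = W * W - fps_const (2 * \<Delta>) * W + 1"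
    unfolding inv_t inverse_one_plus_X by simp
  also have "\<dots> = fps_of_poly (pcompose [:1, -2 * \<Delta>, 1:] [:t, t:])"
    by (simp only: pcompose_pCons fps_of_poly_add fps_of_poly_mult W fps_of_poly_const
        pcompose_0 mult_zero_right add_0_right fps_const_neg[symmetric])
      (simp add: algebra_simps fps_const_neg[symmetric] del: fps_const_neg)
  finally show ?thesis
    unfolding W_def .
qed

lemma Phi_eq_phi_num:
  assumes "t \<noteq> 0"
  shows "(fps_const t * (1 + fps_X)) ^ i * Phi \<Delta> t i = fps_of_poly (pcompose (phi_num \<Delta> i) [:t, t:])"
proof (induction i)
  case 0
  then show ?case by (simp add: Phi_def pcompose_1)
next
  case (Suc i)
  define W where "W = fps_const t * (1 + fps_X)"
  define r where "r = [:1, -2 * \<Delta>, 1:] * phi_num \<Delta> i"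
  define f where "f = alpha \<Delta> t * Phi \<Delta> t i"
  define \<rho> where "\<rho> = fps_of_poly (pcompose r [:t, t:])"
  have W: "fps_of_poly [:t, t:] = W"
    unfolding W_def by (simp add: fps_of_poly_pCons fps_of_poly_const algebra_simps)
  have "\<rho> = fps_of_poly (pcompose [:1, -2 * \<Delta>, 1:] [:t, t:]) * fps_of_poly (pcompose (phi_num \<Delta> i) [:t, t:])"
    unfolding \<rho>_def r_def by (simp only: pcompose_mult fps_of_poly_mult)
  also have "\<dots> = (alpha \<Delta> t * W) * (W ^ i * Phi \<Delta> t i)"
    using alpha_mult[OF assms, of \<Delta>] Suc.IH unfolding W_def by simp
  finally have \<rho>: "\<rho> = f * W ^ Suc i"
    unfolding f_def by (simp add: algebra_simps)
  have "fps_deriv W = fps_const t"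
    unfolding W_def by simp
  then have "fps_deriv (W ^ Suc i) = of_nat (Suc i) * W ^ i * fps_const t"
    by (subst fps_deriv_power) (simp only: fps_of_nat diff_Suc_1 mult_ac)
  then have d\<rho>: "fps_deriv \<rho> = fps_deriv f * W ^ Suc i + f * (of_nat (Suc i) * W ^ i * fps_const t)"
    unfolding \<rho> by (simp only: fps_deriv_mult algebra_simps)
  have d\<rho>': "fps_deriv \<rho> = fps_const t * fps_of_poly (pcompose (pderiv r) [:t, t:])"
    unfolding \<rho>_def fps_of_poly_pderiv[symmetric] pderiv_pcompose
    by (simp add: fps_of_poly_mult fps_of_poly_const pderiv_pCons mult.commute)
  have W_Suc: "(1 + fps_X) * fps_const t * W ^ i = W ^ Suc i"
    unfolding W_def by (simp add: algebra_simps)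
  have "Phi \<Delta> t (Suc i) = euler_op (alpha \<Delta> t) (Phi \<Delta> t i)"
    unfolding Phi_def by simp
  then have "W ^ Suc i * Phi \<Delta> t (Suc i) = (1 + fps_X) * (fps_deriv f * W ^ Suc i)"
    unfolding euler_op_def f_def by (simp only: mult_ac)
  also have "\<dots> = (1 + fps_X) * fps_deriv \<rho> - of_nat (Suc i) * (f * W ^ Suc i)"
    unfolding d\<rho> W_Suc[symmetric] by (simp add: algebra_simps)
  also have "\<dots> = (1 + fps_X) * fps_deriv \<rho> - of_nat (Suc i) * \<rho>"
    unfolding \<rho> ..
  also have "\<dots> = W * fps_of_poly (pcompose (pderiv r) [:t, t:]) - of_nat (Suc i) * \<rho>"
    unfolding d\<rho>' W_def by (simp add: algebra_simps)
  also have "\<dots> = fps_of_poly (pcompose (phi_num \<Delta> (Suc i)) [:t, t:])"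
  proof -
    have rec: "phi_num \<Delta> (Suc i) = [:0, 1:] * pderiv r - Polynomial.smult (of_nat (Suc i)) r"
      by (simp add: r_def)
    have shift: "pcompose ([:0, 1:] * pderiv r) [:t, t:] = [:t, t:] * pcompose (pderiv r) [:t, t:]"
      by (simp add: pcompose_mult pcompose_pCons)
    show ?thesis
      unfolding rec pcompose_diff shift pcompose_smult fps_of_poly_diff fps_of_poly_mult fps_of_poly_smult
        W \<rho>_def fps_of_nat by simp
  qed
  finally show ?case
    unfolding W_def .
qed

lemma Phi_nth_0:
  assumes "t \<noteq> 0"
  shows "fps_nth (Phi \<Delta> t i) 0 = phi \<Delta> i t"
proof -
  have "fps_nth ((fps_const t * (1 + fps_X)) ^ i * Phi \<Delta> t i) 0 = poly (phi_num \<Delta> i) t"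
    unfolding Phi_eq_phi_num[OF assms] by (simp add: poly_0_coeff_0[symmetric] poly_pcompose)
  then show ?thesis
    using assms by (simp add: phi_eq_phi_num fps_nth_power_0 field_simps)
qed

section \<open>Hankel determinants and cofactors\<close>

definition hankel_col_mat :: "real \<Rightarrow> real \<Rightarrow> nat \<Rightarrow> (nat \<Rightarrow> real) \<Rightarrow> real mat" where
  "hankel_col_mat \<Delta> t n v = mat n n (\<lambda>(i, j). if j = n - 1 then v i else phi \<Delta> (i + j) t)"

definition hankel_cofactor :: "real \<Rightarrow> real \<Rightarrow> nat \<Rightarrow> nat \<Rightarrow> real" where
  "hankel_cofactor \<Delta> t n i = cofactor (hankel_mat \<Delta> t n) i (n - 1)"

lemma M_mat_eq_hankel_col_mat: "M_mat \<Delta> t n z = hankel_col_mat \<Delta> t n (\<lambda>i. phi \<Delta> i (t * z))"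
  unfolding M_mat_def hankel_col_mat_def ..

lemma hankel_mat_eq_hankel_col_mat: "hankel_mat \<Delta> t n = hankel_col_mat \<Delta> t n (\<lambda>i. phi \<Delta> (i + (n - 1)) t)"
  unfolding hankel_mat_def hankel_col_mat_def by (intro cong_mat) auto

lemma det_hankel_col_mat:
  assumes "n \<ge> 1"
  shows "det (hankel_col_mat \<Delta> t n v) = (\<Sum>i<n. v i * hankel_cofactor \<Delta> t n i)"
proof -
  have "cofactor (hankel_col_mat \<Delta> t n v) i (n - 1) = hankel_cofactor \<Delta> t n i" for i
  proof -
    have "mat_delete (hankel_col_mat \<Delta> t n v) i (n - 1) = mat_delete (hankel_mat \<Delta> t n) i (n - 1)"
      unfolding mat_delete_def hankel_col_mat_def hankel_mat_def by (intro cong_mat) auto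
    then show ?thesis
      unfolding hankel_cofactor_def cofactor_def by simp
  qed
  moreover have "hankel_col_mat \<Delta> t n v $$ (i, n - 1) = v i" if "i < n" for i
    using that unfolding hankel_col_mat_def by simp
  moreover have "det (hankel_col_mat \<Delta> t n v) = (\<Sum>i<n. hankel_col_mat \<Delta> t n v $$ (i, n - 1)
      * cofactor (hankel_col_mat \<Delta> t n v) i (n - 1))"
    by (rule laplace_expansion_column) (use assms in \<open>auto simp: hankel_col_mat_def\<close>)
  ultimately show ?thesis
    by simp
qed

lemma sum_phi_hankel_cofactor_eq_0:
  assumes "j < n - 1"
  shows "(\<Sum>i<n. phi \<Delta> (i + j) t * hankel_cofactor \<Delta> t n i) = 0"
proof -
  have "(\<Sum>i<n. phi \<Delta> (i + j) t * hankel_cofactor \<Delta> t n i) = det (hankel_col_mat \<Delta> t n (\<lambda>i. phi \<Delta> (i + j) t))"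
    using assms by (simp add: det_hankel_col_mat)
  also have "\<dots> = 0"
  proof (rule det_identical_columns[of _ n j "n - 1"])
    show "col (hankel_col_mat \<Delta> t n (\<lambda>i. phi \<Delta> (i + j) t)) j
        = col (hankel_col_mat \<Delta> t n (\<lambda>i. phi \<Delta> (i + j) t)) (n - 1)"
      using assms by (intro eq_vecI) (auto simp: hankel_col_mat_def)
  qed (use assms in \<open>auto simp: hankel_col_mat_def\<close>)
  finally show ?thesis .
qed

lemma hankel_cofactor_last:
  assumes "n \<ge> 1"
  shows "hankel_cofactor \<Delta> t n (n - 1) = det (hankel_mat \<Delta> t (n - 1))"
proof -
  have "mat_delete (hankel_mat \<Delta> t n) (n - 1) (n - 1) = hankel_mat \<Delta> t (n - 1)"
    unfolding mat_delete_def hankel_mat_def by (intro cong_mat) auto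
  then show ?thesis
    unfolding hankel_cofactor_def cofactor_def by (simp add: mult_2[symmetric])
qed

lemma hankel_cofactor_penultimate:
  assumes "n \<ge> 2"
  shows "hankel_cofactor \<Delta> t n (n - 2) = - det (hankel_col_mat \<Delta> t (n - 1) (\<lambda>i. phi \<Delta> (i + (n - 1)) t))"
proof -
  define B where "B = hankel_col_mat \<Delta> t (n - 1) (\<lambda>i. phi \<Delta> (i + (n - 1)) t)"
  have "Suc (j + n - Suc (Suc 0)) = j + n - Suc 0" for j
    using assms by auto
  then have "mat_delete (hankel_mat \<Delta> t n) (n - 2) (n - 1) = transpose_mat B"
    unfolding mat_delete_def hankel_mat_def B_def hankel_col_mat_def transpose_mat_def
    using assms by (intro cong_mat) (auto simp: add.commute simp del: phi.simps)
  moreover have "det (transpose_mat B) = det B"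
    by (rule det_transpose[of _ "n - 1"]) (simp add: B_def hankel_col_mat_def)
  moreover have "n - 2 + (n - 1) = Suc (2 * (n - 2))"
    using assms by simp
  ultimately have "hankel_cofactor \<Delta> t n (n - 2) = - det B"
    unfolding hankel_cofactor_def cofactor_def by simp
  then show ?thesis
    unfolding B_def .
qed

text \<open>Laplace expansion of \<open>det (M_mat \<Delta> t n z)\<close> along its last column, expanded at \<open>z = 1\<close>
  (\<open>det_M_fps\<close>) and multiplied by \<open>z^(n-1)\<close> to clear the poles at \<open>z = 0\<close> (\<open>det_M_poly\<close>).\<close>

definition det_M_fps :: "real \<Rightarrow> real \<Rightarrow> nat \<Rightarrow> real fps" where
  "det_M_fps \<Delta> t n = (\<Sum>i<n. fps_const (hankel_cofactor \<Delta> t n i) * Phi \<Delta> t i)"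

definition det_M_poly :: "real \<Rightarrow> real \<Rightarrow> nat \<Rightarrow> real poly" where
  "det_M_poly \<Delta> t n = (\<Sum>i<n. Polynomial.smult (hankel_cofactor \<Delta> t n i / t ^ i)
      ([:0, 1:] ^ (n - 1 - i) * pcompose (phi_num \<Delta> i) [:0, t:]))"

lemma euler_op_sum:
  "euler_op \<alpha> (\<Sum>i\<in>A. fps_const (c i) * f i) = (\<Sum>i\<in>A. fps_const (c i) * euler_op \<alpha> (f i))"
  unfolding euler_op_def by (simp add: sum_distrib_left fps_deriv_sum algebra_simps)

lemma euler_op_power_sum:
  "(euler_op \<alpha> ^^ j) (\<Sum>i\<in>A. fps_const (c i) * f i) = (\<Sum>i\<in>A. fps_const (c i) * (euler_op \<alpha> ^^ j) (f i))"
  by (induction j) (simp_all add: euler_op_sum)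

lemma euler_op_power_det_M_fps_nth_0:
  assumes "t \<noteq> 0"
  shows "fps_nth ((euler_op (alpha \<Delta> t) ^^ j) (det_M_fps \<Delta> t n)) 0
    = (\<Sum>i<n. phi \<Delta> (i + j) t * hankel_cofactor \<Delta> t n i)"
proof -
  have "(euler_op (alpha \<Delta> t) ^^ j) (Phi \<Delta> t i) = Phi \<Delta> t (i + j)" for i
    unfolding Phi_def add.commute[of i j] funpow_add comp_def ..
  then show ?thesis
    unfolding det_M_fps_def euler_op_power_sum
    by (simp add: fps_sum_nth Phi_nth_0[OF assms] mult.commute)
qed

lemma poly_det_M_poly:
  assumes "t \<noteq> 0" and "z \<noteq> 0" and "n \<ge> 1"
  shows "poly (det_M_poly \<Delta> t n) z = z ^ (n - 1) * det (M_mat \<Delta> t n z)"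
proof -
  have "poly (det_M_poly \<Delta> t n) z
      = (\<Sum>i<n. hankel_cofactor \<Delta> t n i / t ^ i * (z ^ (n - 1 - i) * poly (phi_num \<Delta> i) (t * z)))"
    unfolding det_M_poly_def by (simp add: poly_sum poly_pcompose mult.commute)
  also have "\<dots> = (\<Sum>i<n. z ^ (n - 1) * (phi \<Delta> i (t * z) * hankel_cofactor \<Delta> t n i))"
  proof (intro sum.cong refl)
    fix i
    assume "i \<in> {..<n}"
    then have "z ^ (n - 1) = z ^ (n - 1 - i) * z ^ i"
      by (simp add: power_add[symmetric])
    then show "hankel_cofactor \<Delta> t n i / t ^ i * (z ^ (n - 1 - i) * poly (phi_num \<Delta> i) (t * z))
        = z ^ (n - 1) * (phi \<Delta> i (t * z) * hankel_cofactor \<Delta> t n i)"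
      using assms by (simp add: phi_eq_phi_num field_simps power_mult_distrib)
  qed
  also have "\<dots> = z ^ (n - 1) * det (M_mat \<Delta> t n z)"
    using assms(3) by (simp add: M_mat_eq_hankel_col_mat det_hankel_col_mat sum_distrib_left)
  finally show ?thesis .
qed

lemma fps_of_poly_det_M_poly:
  assumes "t \<noteq> 0"
  shows "fps_of_poly (pcompose (det_M_poly \<Delta> t n) [:1, 1:]) = (1 + fps_X) ^ (n - 1) * det_M_fps \<Delta> t n"
proof -
  have "fps_of_poly (pcompose (det_M_poly \<Delta> t n) [:1, 1:]) = (\<Sum>i<n. fps_const (hankel_cofactor \<Delta> t n i / t ^ i)
      * ((1 + fps_X) ^ (n - 1 - i) * fps_of_poly (pcompose (phi_num \<Delta> i) [:t, t:])))"
  proof -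
    have shift: "pcompose (pcompose (phi_num \<Delta> i) [:0, t:]) [:1, 1:] = pcompose (phi_num \<Delta> i) [:t, t:]" for i
      by (simp add: pcompose_assoc[symmetric] pcompose_pCons)
    have one_plus_X: "fps_of_poly [:1, 1:] = (1 + fps_X :: real fps)"
      by (simp add: fps_of_poly_pCons fps_of_poly_const)
    show ?thesis
      unfolding det_M_poly_def pcompose_sum pcompose_smult pcompose_mult pcompose_X_power shift
        fps_of_poly_sum fps_of_poly_smult fps_of_poly_mult fps_of_poly_power one_plus_X ..
  qed
  also have "\<dots> = (\<Sum>i<n. (1 + fps_X) ^ (n - 1) * (fps_const (hankel_cofactor \<Delta> t n i) * Phi \<Delta> t i))"
  proof (intro sum.cong refl)
    fix i
    assume i: "i \<in> {..<n}"
    have "(1 + fps_X :: real fps) ^ (n - 1) = (1 + fps_X) ^ (n - 1 - i) * (1 + fps_X) ^ i"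
      using i by (simp add: power_add[symmetric])
    moreover have "fps_of_poly (pcompose (phi_num \<Delta> i) [:t, t:]) = fps_const (t ^ i) * (1 + fps_X) ^ i * Phi \<Delta> t i"
      using Phi_eq_phi_num[OF assms, of i \<Delta>] by (simp add: power_mult_distrib fps_const_power)
    moreover have "fps_const (hankel_cofactor \<Delta> t n i / t ^ i) * fps_const (t ^ i) = fps_const (hankel_cofactor \<Delta> t n i)"
      using assms by (simp add: fps_const_mult[symmetric])
    ultimately show "fps_const (hankel_cofactor \<Delta> t n i / t ^ i)
          * ((1 + fps_X) ^ (n - 1 - i) * fps_of_poly (pcompose (phi_num \<Delta> i) [:t, t:]))
        = (1 + fps_X) ^ (n - 1) * (fps_const (hankel_cofactor \<Delta> t n i) * Phi \<Delta> t i)"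
      by (simp add: algebra_simps)
  qed
  also have "\<dots> = (1 + fps_X) ^ (n - 1) * det_M_fps \<Delta> t n"
    unfolding det_M_fps_def by (simp add: sum_distrib_left)
  finally show ?thesis .
qed

section \<open>The polynomials \<open>h_N\<close>\<close>

text \<open>Applying the Euler operator \<open>j\<close> times to \<open>det_M_fps\<close> yields a determinant with two equal
  columns for \<open>j < n - 1\<close>; this forces the zero of order \<open>n - 1\<close> at \<open>z = 1\<close>, and the cases
  \<open>j = n - 1, n\<close> give the next two Taylor coefficients.\<close>

lemma det_M_poly_factor:
  assumes "t \<noteq> 0" and "t - 2 * \<Delta> + 1 / t \<noteq> 0" and "n \<ge> 1"
  obtains R where "det_M_poly \<Delta> t n = [:-1, 1:] ^ (n - 1) * R"
    and "fact (n - 1) * (t - 2 * \<Delta> + 1 / t) ^ (n - 1) * poly R 1 = det (hankel_mat \<Delta> t n)"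
    and "fact n * (t - 2 * \<Delta> + 1 / t) ^ (n - 1) *
        (poly R 1 * real (n - 1) * ((t - 1 / t) + (t - 2 * \<Delta> + 1 / t)) / 2
         + (t - 2 * \<Delta> + 1 / t) * (poly (pderiv R) 1 - real (n - 1) * poly R 1) + (t - 1 / t) * poly R 1)
      = det (hankel_col_mat \<Delta> t n (\<lambda>i. phi \<Delta> (i + n) t))"
proof -
  define m where "m = n - 1"
  define q where "q = det_M_fps \<Delta> t n"
  define \<alpha> where "\<alpha> = alpha \<Delta> t"
  have n: "n = Suc m"
    using assms(3) m_def by simp
  have euler_q: "fps_nth ((euler_op \<alpha> ^^ j) q) 0 = (\<Sum>i<n. phi \<Delta> (i + j) t * hankel_cofactor \<Delta> t n i)" for j
    unfolding \<alpha>_def q_def by (rule euler_op_power_det_M_fps_nth_0[OF assms(1)])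
  have low: "fps_nth q k = 0" if "k < m" for k
  proof (rule euler_op_power_nth_0_vanishing[OF _ _ that])
    show "fps_nth \<alpha> 0 \<noteq> 0"
      using assms(2) by (simp add: \<alpha>_def alpha_nth)
    show "fps_nth ((euler_op \<alpha> ^^ j) q) 0 = 0" if "j < m" for j
      unfolding euler_q using that m_def by (simp add: sum_phi_hankel_cofactor_eq_0)
  qed
  have shifted: "fps_of_poly (pcompose (det_M_poly \<Delta> t n) [:1, 1:]) = (1 + fps_X) ^ m * q"
    unfolding m_def q_def by (rule fps_of_poly_det_M_poly[OF assms(1)])
  have shifted_coeff: "coeff (pcompose (det_M_poly \<Delta> t n) [:1, 1:]) k = fps_nth ((1 + fps_X) ^ m * q) k" for k
    by (simp only: shifted[symmetric] fps_of_poly_nth)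
  have "coeff (pcompose (det_M_poly \<Delta> t n) [:1, 1:]) k = 0" if "k < m" for k
    unfolding shifted_coeff using that by (simp add: one_plus_X_power_mult_nth low)
  then obtain R where R: "det_M_poly \<Delta> t n = [:-1, 1:] ^ m * R"
    and "poly R 1 = coeff (pcompose (det_M_poly \<Delta> t n) [:1, 1:]) m"
    and "poly (pderiv R) 1 = coeff (pcompose (det_M_poly \<Delta> t n) [:1, 1:]) (Suc m)"
    by (rule obtain_X_minus_1_power_factor)
  then have R1: "poly R 1 = fps_nth q m" and R1': "poly (pderiv R) 1 - real m * poly R 1 = fps_nth q (Suc m)"
    unfolding shifted_coeff by (simp_all add: one_plus_X_power_mult_nth low)
  have q: "fps_X ^ m * fps_shift m q = q"
    by (simp add: fps_X_power_mult_fps_shift low)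
  have "fact m * fps_nth \<alpha> 0 ^ m * fps_nth q m = fps_nth ((euler_op \<alpha> ^^ m) q) 0"
    using euler_op_power_X_power_nth_0[where \<alpha> = \<alpha> and n = m and G = "fps_shift m q"] unfolding q by simp
  also have "\<dots> = det (hankel_mat \<Delta> t n)"
    unfolding euler_q using assms(3) by (simp add: hankel_mat_eq_hankel_col_mat det_hankel_col_mat m_def)
  finally have H: "fact m * fps_nth \<alpha> 0 ^ m * poly R 1 = det (hankel_mat \<Delta> t n)"
    unfolding R1 .
  have "fact n * fps_nth \<alpha> 0 ^ m * (fps_nth q m * real m * (fps_nth \<alpha> 1 + fps_nth \<alpha> 0) / 2
      + fps_nth \<alpha> 0 * fps_nth q (Suc m) + fps_nth \<alpha> 1 * fps_nth q m) = fps_nth ((euler_op \<alpha> ^^ n) q) 0"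
    using euler_op_power_Suc_X_power_nth_0[where \<alpha> = \<alpha> and n = m and G = "fps_shift m q"] unfolding q n by simp
  also have "\<dots> = det (hankel_col_mat \<Delta> t n (\<lambda>i. phi \<Delta> (i + n) t))"
    unfolding euler_q using assms(3) by (simp add: det_hankel_col_mat)
  finally have B: "fact n * fps_nth \<alpha> 0 ^ m * (poly R 1 * real m * (fps_nth \<alpha> 1 + fps_nth \<alpha> 0) / 2
      + fps_nth \<alpha> 0 * (poly (pderiv R) 1 - real m * poly R 1) + fps_nth \<alpha> 1 * poly R 1)
      = det (hankel_col_mat \<Delta> t n (\<lambda>i. phi \<Delta> (i + n) t))"
    unfolding R1' unfolding R1 .
  show ?thesis
    using R H B unfolding m_def \<alpha>_def alpha_nth by (rule that)
qed

lemma h_poly_eqI: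
  assumes "\<And>z. z \<noteq> 0 \<Longrightarrow> z \<noteq> 1 \<Longrightarrow> poly p z = h_raw \<Delta> t n z"
  shows "h_poly \<Delta> t n = p"
  unfolding h_poly_def
proof (rule the_equality)
  fix p'
  assume p': "\<forall>z. z \<noteq> 0 \<and> z \<noteq> 1 \<longrightarrow> poly p' z = h_raw \<Delta> t n z"
  show "p' = p"
  proof (rule ccontr)
    assume "p' \<noteq> p"
    then have "finite {z. poly (p' - p) z = 0}"
      by (intro poly_roots_finite) simp
    moreover have "- {0, 1} \<subseteq> {z. poly (p' - p) z = 0}"
      using p' assms by auto
    ultimately have "finite (- {0, 1 :: real})"
      using finite_subset by blast
    then show False
      by (simp add: infinite_UNIV_char_0 Compl_eq_Diff_UNIV)
  qed
qed (use assms in auto)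

lemma h_poly_eq_smult:
  assumes "t \<noteq> 0" and "n \<ge> 1" and "det_M_poly \<Delta> t n = [:-1, 1:] ^ (n - 1) * R"
  shows "h_poly \<Delta> t n
    = Polynomial.smult (fact (n - 1) * (t - 2 * \<Delta> + 1 / t) ^ (n - 1) / det (hankel_mat \<Delta> t n)) R"
proof (rule h_poly_eqI)
  fix z :: real
  assume z: "z \<noteq> 0" "z \<noteq> 1"
  have "(z - 1) ^ (n - 1) * poly R z = z ^ (n - 1) * det (M_mat \<Delta> t n z)"
    using poly_det_M_poly[OF assms(1) z(1) assms(2), of \<Delta>] unfolding assms(3) by simp
  then have "poly R z = z ^ (n - 1) * det (M_mat \<Delta> t n z) / (z - 1) ^ (n - 1)"
    using z by (simp add: field_simps)
  then show "poly (Polynomial.smult (fact (n - 1) * (t - 2 * \<Delta> + 1 / t) ^ (n - 1) / det (hankel_mat \<Delta> t n)) R) z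
      = h_raw \<Delta> t n z"
    unfolding h_raw_def by (simp add: power_mult_distrib power_divide mult_ac)
qed

lemma hankel_det_quotient_eq_h_poly_deriv_1:
  assumes "t \<noteq> 0" and "t - 2 * \<Delta> + 1 / t \<noteq> 0" and "n \<ge> 1" and "det (hankel_mat \<Delta> t n) \<noteq> 0"
  shows "real n * (real (n - 1) * ((t - 1 / t) + (t - 2 * \<Delta> + 1 / t)) / 2
      + (t - 2 * \<Delta> + 1 / t) * (poly (pderiv (h_poly \<Delta> t n)) 1 - real (n - 1)) + (t - 1 / t))
    = det (hankel_col_mat \<Delta> t n (\<lambda>i. phi \<Delta> (i + n) t)) / det (hankel_mat \<Delta> t n)"
proof -
  define a where "a = t - 2 * \<Delta> + 1 / t"
  define b where "b = t - 1 / t"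
  define c where "c = fact (n - 1) * a ^ (n - 1)"
  obtain R where R: "det_M_poly \<Delta> t n = [:-1, 1:] ^ (n - 1) * R"
    and H: "c * poly R 1 = det (hankel_mat \<Delta> t n)"
    and B: "fact n * a ^ (n - 1) * (poly R 1 * real (n - 1) * (b + a) / 2
        + a * (poly (pderiv R) 1 - real (n - 1) * poly R 1) + b * poly R 1)
      = det (hankel_col_mat \<Delta> t n (\<lambda>i. phi \<Delta> (i + n) t))"
    using det_M_poly_factor[OF assms(1-3)] unfolding a_def b_def c_def by blast
  have R1: "poly R 1 \<noteq> 0" and c: "c \<noteq> 0"
    using H assms(4) by auto
  have "fact n * a ^ (n - 1) = real n * c"
    using assms(3) unfolding c_def by (cases n) simp_all
  then have "real n * c * (poly R 1 * real (n - 1) * (b + a) / 2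
        + a * (poly (pderiv R) 1 - real (n - 1) * poly R 1) + b * poly R 1)
      = det (hankel_col_mat \<Delta> t n (\<lambda>i. phi \<Delta> (i + n) t))"
    using B by simp
  moreover have "real n * (real (n - 1) * (b + a) / 2 + a * (poly (pderiv R) 1 / poly R 1 - real (n - 1)) + b)
      = real n * c * (poly R 1 * real (n - 1) * (b + a) / 2
        + a * (poly (pderiv R) 1 - real (n - 1) * poly R 1) + b * poly R 1) / (c * poly R 1)"
    using R1 c by (simp add: field_simps)
  ultimately have "real n * (real (n - 1) * (b + a) / 2 + a * (poly (pderiv R) 1 / poly R 1 - real (n - 1)) + b)
      = det (hankel_col_mat \<Delta> t n (\<lambda>i. phi \<Delta> (i + n) t)) / det (hankel_mat \<Delta> t n)"
    unfolding H[symmetric] by simp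
  moreover have "poly (pderiv (h_poly \<Delta> t n)) 1 = poly (pderiv R) 1 / poly R 1"
  proof -
    have "h_poly \<Delta> t n = Polynomial.smult (c / det (hankel_mat \<Delta> t n)) R"
      using h_poly_eq_smult[OF assms(1,3) R] unfolding a_def c_def .
    moreover have "c / det (hankel_mat \<Delta> t n) = 1 / poly R 1"
      using c unfolding H[symmetric] by simp
    ultimately show ?thesis
      by (simp add: pderiv_smult)
  qed
  ultimately show ?thesis
    unfolding a_def b_def by simp
qed

lemma h_poly_deriv_1:
  fixes t \<Delta> :: real and n :: nat
  defines "H \<equiv> det (hankel_mat \<Delta> t n)"
    and "B \<equiv> det (hankel_col_mat \<Delta> t n (\<lambda>i. phi \<Delta> (i + n) t))"
  assumes "t \<noteq> 0" and "1 - 2 * \<Delta> * t + t ^ 2 \<noteq> 0" and "n \<ge> 1" and "H \<noteq> 0"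
  shows "(1 - 2 * \<Delta> * t + t ^ 2) * poly (pderiv (h_poly \<Delta> t n)) 1
    = real n - real (n - 1) * \<Delta> * t - t ^ 2 + t * B / (real n * H)"
proof -
  define a where "a = t - 2 * \<Delta> + 1 / t"
  define x where "x = poly (pderiv (h_poly \<Delta> t n)) 1"
  have ta: "t * a = 1 - 2 * \<Delta> * t + t ^ 2"
    using assms(3) unfolding a_def by (simp add: field_simps power2_eq_square)
  with assms(4) have "a \<noteq> 0"
    by (metis mult_zero_right)
  then have "real n * (real (n - 1) * ((t - 1 / t) + a) / 2 + a * (x - real (n - 1)) + (t - 1 / t)) = B / H"
    using hankel_det_quotient_eq_h_poly_deriv_1[of t \<Delta> n] assms(3,5,6)
    unfolding a_def x_def H_def B_def by simp
  then have "a * x = B / (real n * H) - real (n - 1) * ((t - 1 / t) + a) / 2 + a * real (n - 1) - (t - 1 / t)"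
    using assms(5,6) by (simp add: field_simps)
  then have "t * a * x = t * (B / (real n * H) - real (n - 1) * ((t - 1 / t) + a) / 2 + a * real (n - 1) - (t - 1 / t))"
    by simp
  also have "\<dots> = real n - real (n - 1) * \<Delta> * t - t ^ 2 + t * B / (real n * H)"
    using assms(3,5) unfolding a_def by (simp add: field_simps power2_eq_square of_nat_diff)
  finally show ?thesis
    unfolding ta x_def .
qed

lemma coeff_det_M_poly:
  "coeff (det_M_poly \<Delta> t (Suc (Suc k))) 0 = hankel_cofactor \<Delta> t (Suc (Suc k)) (Suc k) / t ^ Suc k
      * coeff (phi_num \<Delta> (Suc k)) 0"
  "coeff (det_M_poly \<Delta> t (Suc (Suc k))) 1 = hankel_cofactor \<Delta> t (Suc (Suc k)) (Suc k) / t ^ Suc k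
      * (t * coeff (phi_num \<Delta> (Suc k)) 1) + hankel_cofactor \<Delta> t (Suc (Suc k)) k / t ^ k * coeff (phi_num \<Delta> k) 0"
proof -
  define n where "n = Suc (Suc k)"
  define f where "f j i = hankel_cofactor \<Delta> t n i / t ^ i
    * coeff ([:0, 1:] ^ (n - 1 - i) * pcompose (phi_num \<Delta> i) [:0, t:]) j" for j i
  have coeff_X_power_mult: "coeff ([:0, 1:] ^ l * p) j = (if j < l then 0 else coeff p (j - l))"
    for l j and p :: "real poly"
    by (simp add: monom_altdef[of 1, simplified, symmetric] coeff_monom_mult)
  have "coeff (det_M_poly \<Delta> t n) j = (\<Sum>i<n. f j i)" for j
    unfolding det_M_poly_def f_def by (simp add: coeff_sum)
  also have "(\<Sum>i<n. f j i) = (\<Sum>i<k. f j i) + f j k + f j (Suc k)" for j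
    unfolding n_def by simp
  moreover have "(\<Sum>i<k. f j i) = 0" if "j \<le> 1" for j
    using that by (intro sum.neutral) (auto simp: f_def n_def coeff_X_power_mult)
  ultimately show "coeff (det_M_poly \<Delta> t (Suc (Suc k))) 0 = hankel_cofactor \<Delta> t (Suc (Suc k)) (Suc k) / t ^ Suc k
      * coeff (phi_num \<Delta> (Suc k)) 0"
    "coeff (det_M_poly \<Delta> t (Suc (Suc k))) 1 = hankel_cofactor \<Delta> t (Suc (Suc k)) (Suc k) / t ^ Suc k
      * (t * coeff (phi_num \<Delta> (Suc k)) 1) + hankel_cofactor \<Delta> t (Suc (Suc k)) k / t ^ k * coeff (phi_num \<Delta> k) 0"
    unfolding n_def[symmetric]
    by (simp_all add: f_def n_def coeff_X_power_mult coeff_pcompose_linear poly_0_coeff_0)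
qed

lemma h_poly_logderiv_0:
  fixes k :: nat and t \<Delta> :: real
  defines "H \<equiv> det (hankel_mat \<Delta> t (Suc k))"
    and "B \<equiv> det (hankel_col_mat \<Delta> t (Suc k) (\<lambda>i. phi \<Delta> (i + Suc k) t))"
  assumes "t \<noteq> 0" and "1 - 2 * \<Delta> * t + t ^ 2 \<noteq> 0" and "poly (h_poly \<Delta> t (Suc (Suc k))) 0 \<noteq> 0"
  shows "H \<noteq> 0"
    and "poly (pderiv (h_poly \<Delta> t (Suc (Suc k)))) 0 / poly (h_poly \<Delta> t (Suc (Suc k))) 0
      = real (Suc k) - real k * \<Delta> * t + t * B / (real (Suc k) * H)"
proof -
  define N where "N = Suc (Suc k)"
  define K where "K = fact (N - 1) * (t - 2 * \<Delta> + 1 / t) ^ (N - 1) / det (hankel_mat \<Delta> t N)"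
  define s where "s = (-1 :: real) ^ Suc k"
  have "t * (t - 2 * \<Delta> + 1 / t) = 1 - 2 * \<Delta> * t + t ^ 2"
    using assms(3) by (simp add: field_simps power2_eq_square)
  with assms(4) have a: "t - 2 * \<Delta> + 1 / t \<noteq> 0"
    by (metis mult_zero_right)
  have "N \<ge> 1"
    unfolding N_def by simp
  then obtain R where "det_M_poly \<Delta> t N = [:-1, 1:] ^ (N - 1) * R"
    by (rule det_M_poly_factor[OF assms(3) a])
  then have R: "det_M_poly \<Delta> t N = [:-1, 1:] ^ Suc k * R"
    unfolding N_def by simp
  have h: "h_poly \<Delta> t N = Polynomial.smult K R"
    unfolding K_def using h_poly_eq_smult[of t N \<Delta> R] R assms(3) by (simp add: N_def)
  have K: "K \<noteq> 0" and R0: "coeff R 0 \<noteq> 0"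
    using assms(5) unfolding N_def[symmetric] h by (auto simp: poly_0_coeff_0)
  have s: "s \<noteq> 0" "(-1) ^ k = - s"
    unfolding s_def by simp_all
  have last: "hankel_cofactor \<Delta> t N (Suc k) = H"
    using hankel_cofactor_last[of N \<Delta> t] unfolding N_def H_def by simp
  have penultimate: "hankel_cofactor \<Delta> t N k = - B"
    using hankel_cofactor_penultimate[of N \<Delta> t] unfolding N_def B_def by (simp del: phi.simps)
  have phi_num_coeffs: "coeff (phi_num \<Delta> (Suc k)) 0 = s * fact (Suc k)"
    "coeff (phi_num \<Delta> (Suc k)) 1 = - \<Delta> * real k * (s * fact (Suc k))"
    "coeff (phi_num \<Delta> k) 0 = - s * fact k"
    unfolding coeff_1_phi_num coeff_0_phi_num s_def by simp_all
  have "s * coeff R 0 = coeff (det_M_poly \<Delta> t N) 0"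
    unfolding R coeff_X_minus_1_power_mult s_def ..
  also have "\<dots> = s * (H / t ^ Suc k * fact (Suc k))"
    using coeff_det_M_poly(1)[of \<Delta> t k] unfolding N_def[symmetric] last phi_num_coeffs by simp
  finally have c0: "coeff R 0 = H / t ^ Suc k * fact (Suc k)"
    using mult_left_cancel[OF s(1)] by blast
  then show H: "H \<noteq> 0"
    using R0 by auto
  have "s * (coeff R 1 - real (Suc k) * coeff R 0) = coeff (det_M_poly \<Delta> t N) 1"
    unfolding R coeff_X_minus_1_power_mult s_def by simp
  also have "\<dots> = H / t ^ Suc k * (t * (- \<Delta> * real k * (s * fact (Suc k)))) + (- B) / t ^ k * (- s * fact k)"
    using coeff_det_M_poly(2)[of \<Delta> t k] unfolding N_def[symmetric] last penultimate phi_num_coeffs .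
  also have "\<dots> = s * (- t * \<Delta> * real k * coeff R 0 + B * fact k / t ^ k)"
    unfolding c0 by (simp add: algebra_simps)
  finally have "coeff R 1 - real (Suc k) * coeff R 0 = - t * \<Delta> * real k * coeff R 0 + B * fact k / t ^ k"
    using mult_left_cancel[OF s(1)] by blast
  moreover have "B * fact k / t ^ k = t * B / (real (Suc k) * H) * coeff R 0"
    unfolding c0 using H assms(3) by (simp add: field_simps del: of_nat_Suc)
  ultimately have "coeff R 1 / coeff R 0 = real (Suc k) - real k * \<Delta> * t + t * B / (real (Suc k) * H)"
    using R0 by (simp add: field_simps)
  then show "poly (pderiv (h_poly \<Delta> t (Suc (Suc k)))) 0 / poly (h_poly \<Delta> t (Suc (Suc k))) 0
      = real (Suc k) - real k * \<Delta> * t + t * B / (real (Suc k) * H)"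
    unfolding N_def[symmetric] h using K by (simp add: pderiv_smult poly_0_coeff_0 coeff_pderiv)
qed

theorem mainTheorem4:
  fixes N :: nat and t \<Delta> :: real
  assumes "N \<ge> 2"
    and "t \<noteq> 0"
    and "poly (h_poly \<Delta> t N) 0 \<noteq> 0"
    and "1 - 2 * \<Delta> * t + t ^ 2 \<noteq> 0"
  shows "poly (pderiv (h_poly \<Delta> t (N - 1))) 1 =
    1 / (1 - 2 * \<Delta> * t + t ^ 2) *
      (poly (pderiv (h_poly \<Delta> t N)) 0 / poly (h_poly \<Delta> t N) 0 - t ^ 2)"
proof -
  define k where "k = N - 2"
  have N: "N = Suc (Suc k)"
    using assms(1) unfolding k_def by simp
  define H where "H = det (hankel_mat \<Delta> t (Suc k))"
  define B where "B = det (hankel_col_mat \<Delta> t (Suc k) (\<lambda>i. phi \<Delta> (i + Suc k) t))"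
  note at_0 = h_poly_logderiv_0[OF assms(2,4) assms(3)[unfolded N], folded H_def B_def N]
  have "(1 - 2 * \<Delta> * t + t ^ 2) * poly (pderiv (h_poly \<Delta> t (N - 1))) 1
      = real (Suc k) - real k * \<Delta> * t - t ^ 2 + t * B / (real (Suc k) * H)"
    using h_poly_deriv_1[OF assms(2,4), of "Suc k", folded H_def B_def] at_0(1) unfolding N by simp
  then have "(1 - 2 * \<Delta> * t + t ^ 2) * poly (pderiv (h_poly \<Delta> t (N - 1))) 1
      = poly (pderiv (h_poly \<Delta> t N)) 0 / poly (h_poly \<Delta> t N) 0 - t ^ 2"
    unfolding at_0(2) by simp
  then show ?thesis
    using assms(4) by (simp add: field_simps)
qed

end
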